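(* Let $\bar Q=(Q,I)$ be a locally gentle bound quiver and let $\omega$ be a walk of $\bar Q$ that does not kiss itself. If $\omega$ contains as a factor a non-trivial oriented cycle $c$ of $Q$ with $c,c^2\notin I$, then $\omega$ (up to inversion) is of the form $\sigma c^{\pm\infty}$ for some (possibly infinite) substring $\sigma$, where $c^{\infty}=ccc\cdots$ and $c^{-\infty}=(c^{-1})^\infty$.
   Context: Locally gentle bound quiver $\bar Q=(Q,I)$: $Q$ finite, $I$ an ideal of $kQ$ generated by paths of length two ($kQ/I$ possibly infinite-dimensional), each vertex with at most two incoming and two outgoing arrows, and for each arrow $\beta$ at most one $\alpha$ with $t(\alpha)=s(\beta)$, $\alpha\beta\notin I$, at most one with $\alpha\beta\in I$, at most one $\gamma$ with $t(\beta)=s(\gamma)$, $\beta\gamma\notin I$, at most one with $\beta\gamma\in I$. $\bar Q^{\mathrm{bl}}$ adds degree-one blossom vertices and arrows so each vertex of $Q_0$ has two incoming and two outgoing arrows, relations completed to stay locally gentle. A finite string is a composable word $\alpha_1^{\varepsilon_1}\cdots\alpha_\ell^{\varepsilon_\ell}$ in arrows and formal inverses with no factor $\pi^{\pm1}$ for a path $\pi\in I$ and no factor $\alpha\alpha^{-1}$, $\alpha^{-1}\alpha$; an eventually cyclic string is ${}^\infty(c_1^{\varepsilon_1})\sigma(c_2^{\varepsilon_2})^\infty$ with $c_i$ oriented cycles (possibly of length zero) and $c_1^{2\varepsilon_1}\sigma c_2^{2\varepsilon_2}$ a finite string. A walk is a maximal (finite or eventually cyclic) string of $\bar Q^{\mathrm{bl}}$,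 identified with its inverse. For $\omega=\prod_{i<\ell<j}\alpha_\ell^{\varepsilon_\ell}$, a substring $\prod_{i'<\ell<j'}\alpha_\ell^{\varepsilon_\ell}$ ($i\le i'<j'\le j$, strict at finite ends, remembered with its position) is on top if ($i'=-\infty$ or $\varepsilon_{i'}=-1$) and ($j'=\infty$ or $\varepsilon_{j'}=1$), at the bottom if ($i'=-\infty$ or $\varepsilon_{i'}=1$) and ($j'=\infty$ or $\varepsilon_{j'}=-1$). $\omega$ kisses itself if some finite string occurs (at possibly different positions) as a top substring and as a bottom substring of $\omega$. *)

theory Defs
  imports Main
begin

text \<open>A bound quiver (Q,I): vertices, arrows, source/target maps, and the set of
  generating relations of I (paths of length two, given as pairs of composable arrows).\<close>
record ('v, 'a) bquiver =
  verts :: "'v set"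
  arrs  :: "'a set"
  qsrc  :: "'a \<Rightarrow> 'v"
  qtgt  :: "'a \<Rightarrow> 'v"
  rels  :: "('a \<times> 'a) set"

definition wf_bquiver :: "('v, 'a) bquiver \<Rightarrow> bool" where
  "wf_bquiver Q \<longleftrightarrow>
     (\<forall>a\<in>arrs Q. qsrc Q a \<in> verts Q \<and> qtgt Q a \<in> verts Q) \<and>
     rels Q \<subseteq> {(a, b). a \<in> arrs Q \<and> b \<in> arrs Q \<and> qtgt Q a = qsrc Q b}"

definition locally_gentle :: "('v, 'a) bquiver \<Rightarrow> bool" where
  "locally_gentle Q \<longleftrightarrow> wf_bquiver Q \<and> finite (verts Q) \<and> finite (arrs Q) \<and>
     (\<forall>v\<in>verts Q. card {a\<in>arrs Q. qtgt Q a = v} \<le> 2 \<and> card {a\<in>arrs Q. qsrc Q a = v} \<le> 2) \<and>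
     (\<forall>\<beta>\<in>arrs Q.
        card {\<alpha>\<in>arrs Q. qtgt Q \<alpha> = qsrc Q \<beta> \<and> (\<alpha>, \<beta>) \<notin> rels Q} \<le> 1 \<and>
        card {\<alpha>\<in>arrs Q. qtgt Q \<alpha> = qsrc Q \<beta> \<and> (\<alpha>, \<beta>) \<in> rels Q} \<le> 1 \<and>
        card {\<gamma>\<in>arrs Q. qtgt Q \<beta> = qsrc Q \<gamma> \<and> (\<beta>, \<gamma>) \<notin> rels Q} \<le> 1 \<and>
        card {\<gamma>\<in>arrs Q. qtgt Q \<beta> = qsrc Q \<gamma> \<and> (\<beta>, \<gamma>) \<in> rels Q} \<le> 1)"

definition is_blossoming :: "('v, 'a) bquiver \<Rightarrow> ('v, 'a) bquiver \<Rightarrow> bool" where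
  "is_blossoming Q Qb \<longleftrightarrow>
     verts Q \<subseteq> verts Qb \<and> arrs Q \<subseteq> arrs Qb \<and>
     (\<forall>a\<in>arrs Q. qsrc Qb a = qsrc Q a \<and> qtgt Qb a = qtgt Q a) \<and>
     rels Qb \<inter> (arrs Q \<times> arrs Q) = rels Q \<and>
     (\<forall>a\<in>arrs Qb - arrs Q.
        (qsrc Qb a \<in> verts Q \<and> qtgt Qb a \<in> verts Qb - verts Q) \<or>
        (qsrc Qb a \<in> verts Qb - verts Q \<and> qtgt Qb a \<in> verts Q)) \<and>
     (\<forall>v\<in>verts Qb - verts Q. card {a\<in>arrs Qb. qsrc Qb a = v \<or> qtgt Qb a = v} = 1) \<and>
     (\<forall>v\<in>verts Q. card {a\<in>arrs Qb. qtgt Qb a = v} = 2 \<and> card {a\<in>arrs Qb. qsrc Qb a = v} = 2) \<and>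
     locally_gentle Qb"

text \<open>Since I is generated by the paths of length two in rels Q, a path (list of arrows)
  lies in I iff it contains one of them as a factor.\<close>
definition path_in_ideal :: "('v, 'a) bquiver \<Rightarrow> 'a list \<Rightarrow> bool" where
  "path_in_ideal Q p \<longleftrightarrow> (\<exists>i. Suc i < length p \<and> (p ! i, p ! Suc i) \<in> rels Q)"

definition is_oriented_cycle :: "('v, 'a) bquiver \<Rightarrow> 'a list \<Rightarrow> bool" where
  "is_oriented_cycle Q c \<longleftrightarrow> c \<noteq> [] \<and> set c \<subseteq> arrs Q \<and>
     (\<forall>i. Suc i < length c \<longrightarrow> qtgt Q (c ! i) = qsrc Q (c ! Suc i)) \<and>
     qtgt Q (last c) = qsrc Q (hd c)"

text \<open>A letter is an arrow with an orientation: (\<alpha>, True) is \<alpha>, (\<alpha>, False) is its formal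
  inverse. A (possibly infinite) word is represented by bounds lo, hi (None = infinite)
  and a map w; the letters are w l for lo < l < hi.\<close>
type_synonym 'a letter = "'a \<times> bool"

definition lsrc :: "('v, 'a) bquiver \<Rightarrow> 'a letter \<Rightarrow> 'v" where
  "lsrc Q x = (if snd x then qsrc Q (fst x) else qtgt Q (fst x))"

definition ltgt :: "('v, 'a) bquiver \<Rightarrow> 'a letter \<Rightarrow> 'v" where
  "ltgt Q x = (if snd x then qtgt Q (fst x) else qsrc Q (fst x))"

text \<open>Two consecutive letters x y are allowed in a string: composable, not of the form
  \<alpha>\<alpha>\<inverse> or \<alpha>\<inverse>\<alpha>, and not a factor \<pi> or \<pi>\<inverse> with \<pi> a path in I (as I is generated
  by paths of length two, it suffices to exclude the generators).\<close>
definition string_step :: "('v, 'a) bquiver \<Rightarrow> 'a letter \<Rightarrow> 'a letter \<Rightarrow> bool" where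
  "string_step Q x y \<longleftrightarrow> ltgt Q x = lsrc Q y \<and>
     \<not> (fst x = fst y \<and> snd x \<noteq> snd y) \<and>
     (snd x \<and> snd y \<longrightarrow> (fst x, fst y) \<notin> rels Q) \<and>
     (\<not> snd x \<and> \<not> snd y \<longrightarrow> (fst y, fst x) \<notin> rels Q)"

definition in_dom :: "int option \<Rightarrow> int option \<Rightarrow> int \<Rightarrow> bool" where
  "in_dom lo hi l \<longleftrightarrow> (case lo of None \<Rightarrow> True | Some i \<Rightarrow> i < l) \<and>
                      (case hi of None \<Rightarrow> True | Some j \<Rightarrow> l < j)"

definition is_string :: "('v, 'a) bquiver \<Rightarrow> int option \<Rightarrow> int option \<Rightarrow> (int \<Rightarrow> 'a letter) \<Rightarrow> bool" where
  "is_string Q lo hi w \<longleftrightarrow>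
     (\<forall>l. in_dom lo hi l \<longrightarrow> fst (w l) \<in> arrs Q) \<and>
     (\<forall>l. in_dom lo hi l \<and> in_dom lo hi (l + 1) \<longrightarrow> string_step Q (w l) (w (l + 1)))"

text \<open>Finite or eventually cyclic: each infinite end is eventually a power of an oriented
  cycle, taken directly or inversely (periodic with constant orientation).\<close>
definition eventually_cyclic :: "int option \<Rightarrow> int option \<Rightarrow> (int \<Rightarrow> 'a letter) \<Rightarrow> bool" where
  "eventually_cyclic lo hi w \<longleftrightarrow>
     (lo = None \<longrightarrow> (\<exists>n p. p > 0 \<and> (\<forall>l\<le>n. w (l - p) = w l \<and> snd (w l) = snd (w n)))) \<and>
     (hi = None \<longrightarrow> (\<exists>n p. p > 0 \<and> (\<forall>l\<ge>n. w (l + p) = w l \<and> snd (w l) = snd (w n))))"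

definition maximal_string :: "('v, 'a) bquiver \<Rightarrow> int option \<Rightarrow> int option \<Rightarrow> (int \<Rightarrow> 'a letter) \<Rightarrow> bool" where
  "maximal_string Q lo hi w \<longleftrightarrow>
     (\<forall>i. lo = Some i \<longrightarrow> \<not> (\<exists>x. fst x \<in> arrs Q \<and> string_step Q x (w (i + 1)))) \<and>
     (\<forall>j. hi = Some j \<longrightarrow> \<not> (\<exists>x. fst x \<in> arrs Q \<and> string_step Q (w (j - 1)) x))"

definition is_walk :: "('v, 'a) bquiver \<Rightarrow> int option \<Rightarrow> int option \<Rightarrow> (int \<Rightarrow> 'a letter) \<Rightarrow> bool" where
  "is_walk Qb lo hi w \<longleftrightarrow> is_string Qb lo hi w \<and> (\<exists>l. in_dom lo hi l) \<and>
     eventually_cyclic lo hi w \<and> maximal_string Qb lo hi w"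

definition inv_word :: "(int \<Rightarrow> 'a letter) \<Rightarrow> int \<Rightarrow> 'a letter" where
  "inv_word w l = (fst (w (- l)), \<not> snd (w (- l)))"

text \<open>Self-kissing: a finite substring strictly between positions i1 < j1 is on top
  (letter i1 inverse, letter j1 direct), one strictly between i2 < j2 is at the bottom
  (letter i2 direct, letter j2 inverse), and they are the same string (same start vertex,
  same length, same letters).  Finite substrings are bounded by existing letters.\<close>
definition kisses_itself :: "('v, 'a) bquiver \<Rightarrow> int option \<Rightarrow> int option \<Rightarrow> (int \<Rightarrow> 'a letter) \<Rightarrow> bool" where
  "kisses_itself Q lo hi w \<longleftrightarrow>
     (\<exists>i1 j1 i2 j2. i1 < j1 \<and> i2 < j2 \<and>
        in_dom lo hi i1 \<and> in_dom lo hi j1 \<and> in_dom lo hi i2 \<and> in_dom lo hi j2 \<and>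
        \<not> snd (w i1) \<and> snd (w j1) \<and> snd (w i2) \<and> \<not> snd (w j2) \<and>
        j1 - i1 = j2 - i2 \<and> ltgt Q (w i1) = ltgt Q (w i2) \<and>
        (\<forall>k. 0 < k \<and> k < j1 - i1 \<longrightarrow> w (i1 + k) = w (i2 + k)))"

definition has_factor :: "int option \<Rightarrow> int option \<Rightarrow> (int \<Rightarrow> 'a letter) \<Rightarrow> 'a list \<Rightarrow> bool" where
  "has_factor lo hi w c \<longleftrightarrow>
     (\<exists>n. \<forall>k < length c. in_dom lo hi (n + int k) \<and> w (n + int k) = (c ! k, True))"

definition ends_with_cycle_power :: "int option \<Rightarrow> int option \<Rightarrow> (int \<Rightarrow> 'a letter) \<Rightarrow> 'a list \<Rightarrow> bool" where
  "ends_with_cycle_power lo hi w c \<longleftrightarrow> hi = None \<and>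
     (\<exists>n. in_dom lo hi n \<and>
        ((\<forall>k::nat. w (n + int k) = (c ! (k mod length c), True)) \<or>
         (\<forall>k::nat. w (n + int k) = (c ! (length c - 1 - k mod length c), False))))"

end

theory Submission
  imports Defs
begin

(* In a locally gentle quiver a direct letter has at most one direct successor and at most one
   direct predecessor avoiding the relations, and since c\<^sup>2 \<notin> I the arrows of c c c ... are
   such successors.  So from the factor c the walk keeps reading c c c ... in both directions
   until it meets an inverse letter; by maximality it cannot just stop there.  If the run is
   infinite on one side, the walk is \<sigma> c\<^sup>\<infinity> or its inverse.  Otherwise the run is framed by
   inverse letters and has length at least |c|: without its last |c| letters it is a substring on
   top, without its first |c| letters one at the bottom, and by periodicity the two are equal,
   so the walk would kiss itself. *)

definition cyc_nth :: "'a list \<Rightarrow> int \<Rightarrow> 'a" where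
  "cyc_nth c t = c ! nat (t mod int (length c))"

lemma cyc_nth_in_set: "c \<noteq> [] \<Longrightarrow> cyc_nth c t \<in> set c"
  unfolding cyc_nth_def by (simp add: nat_less_iff)

lemma cyc_nth_add_length: "cyc_nth c (t + int (length c)) = cyc_nth c t"
  by (simp add: cyc_nth_def)

lemma cyc_nth_of_nat: "cyc_nth c (int k) = c ! (k mod length c)"
  by (simp add: cyc_nth_def nat_mod_as_int)

lemma cyc_nth_neg:
  assumes "c \<noteq> []"
  shows "cyc_nth c (- 1 - int k) = c ! (length c - 1 - k mod length c)"
proof -
  let ?p = "length c"
  have "int k = int (k div ?p) * int ?p + int (k mod ?p)"
    by (simp flip: of_nat_mult of_nat_add)
  moreover have "k mod ?p < ?p" using assms by simp
  ultimately have "- 1 - int k = int (?p - 1 - k mod ?p) + (- int (k div ?p) - 1) * int ?p"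
    by (simp add: algebra_simps)
  then have "(- 1 - int k) mod int ?p = int (?p - 1 - k mod ?p)"
    using assms by simp
  then show ?thesis by (simp add: cyc_nth_def)
qed

lemma nth_append_self: "i < 2 * length c \<Longrightarrow> (c @ c) ! i = c ! (i mod length c)"
  by (simp add: nth_append mod_if)

lemma cyc_nth_succ:
  assumes "c \<noteq> []"
  obtains i where "i < length c" "cyc_nth c t = (c @ c) ! i" "cyc_nth c (t + 1) = (c @ c) ! Suc i"
proof
  let ?p = "int (length c)"
  let ?i = "nat (t mod ?p)"
  show "?i < length c" using assms by (simp add: nat_less_iff)
  then show "cyc_nth c t = (c @ c) ! ?i" by (simp add: cyc_nth_def nth_append)
  have "(t + 1) mod ?p = int (Suc ?i) mod ?p"
    using assms by (simp add: mod_simps add.commute[of 1])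
  then have "nat ((t + 1) mod ?p) = Suc ?i mod length c"
    by (metis nat_int zmod_int)
  then show "cyc_nth c (t + 1) = (c @ c) ! Suc ?i"
    using \<open>?i < length c\<close> by (simp add: cyc_nth_def nth_append_self)
qed

lemma oriented_cycle_append_self_composable:
  assumes "is_oriented_cycle Q c" "i < length c"
  shows "qtgt Q ((c @ c) ! i) = qsrc Q ((c @ c) ! Suc i)"
proof (cases "Suc i < length c")
  case True
  then show ?thesis using assms unfolding is_oriented_cycle_def by (simp add: nth_append)
next
  case False
  then have "i = length c - 1" "c \<noteq> []" using assms(2) by auto
  then have "(c @ c) ! i = last c" "(c @ c) ! Suc i = hd c"
    by (simp_all add: nth_append last_conv_nth hd_conv_nth)
  then show ?thesis using assms(1) unfolding is_oriented_cycle_def by simp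
qed

context
  fixes Q :: "('v, 'a) bquiver" and c :: "'a list"
  assumes cycle: "is_oriented_cycle Q c"
begin

lemma cyc_nth_in_arrs: "cyc_nth c t \<in> arrs Q"
  using cycle cyc_nth_in_set unfolding is_oriented_cycle_def by blast

lemma cyc_nth_composable: "qtgt Q (cyc_nth c t) = qsrc Q (cyc_nth c (t + 1))"
proof -
  obtain i where "i < length c" "cyc_nth c t = (c @ c) ! i" "cyc_nth c (t + 1) = (c @ c) ! Suc i"
    using cycle cyc_nth_succ unfolding is_oriented_cycle_def by blast
  then show ?thesis using oriented_cycle_append_self_composable[OF cycle] by simp
qed

lemma cyc_nth_not_rel:
  assumes "\<not> path_in_ideal Q (c @ c)"
  shows "(cyc_nth c t, cyc_nth c (t + 1)) \<notin> rels Q"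
proof -
  obtain i where "i < length c" "cyc_nth c t = (c @ c) ! i" "cyc_nth c (t + 1) = (c @ c) ! Suc i"
    using cycle cyc_nth_succ unfolding is_oriented_cycle_def by blast
  then show ?thesis using assms unfolding path_in_ideal_def by auto
qed

end

lemma blossoming_oriented_cycle:
  assumes "is_blossoming Q Qb" "is_oriented_cycle Q c"
  shows "is_oriented_cycle Qb c"
proof -
  have "set c \<subseteq> arrs Q" "c \<noteq> []" using assms(2) unfolding is_oriented_cycle_def by auto
  then have "\<forall>a\<in>set c. qsrc Qb a = qsrc Q a \<and> qtgt Qb a = qtgt Q a" "set c \<subseteq> arrs Qb"
    using assms(1) unfolding is_blossoming_def by blast+
  moreover have "last c \<in> set c" "hd c \<in> set c" using \<open>c \<noteq> []\<close> by simp_all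
  ultimately show ?thesis using assms(2) unfolding is_oriented_cycle_def by (simp add: Ball_def)
qed

lemma blossoming_path_in_ideal_iff:
  assumes "is_blossoming Q Qb" "set p \<subseteq> arrs Q"
  shows "path_in_ideal Qb p \<longleftrightarrow> path_in_ideal Q p"
proof -
  have rels: "rels Qb \<inter> (arrs Q \<times> arrs Q) = rels Q"
    using assms(1) unfolding is_blossoming_def by blast
  have "(p ! i, p ! Suc i) \<in> rels Qb \<longleftrightarrow> (p ! i, p ! Suc i) \<in> rels Q" if "Suc i < length p" for i
  proof -
    have "p ! i \<in> arrs Q" "p ! Suc i \<in> arrs Q" using that assms(2) nth_mem by force+
    then show ?thesis using rels by blast
  qed
  then show ?thesis unfolding path_in_ideal_def by blast
qed

lemma blossoming_cyc_nth:
  assumes "is_blossoming Q Qb" "is_oriented_cycle Q c" "\<not> path_in_ideal Q (c @ c)"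
  shows "cyc_nth c t \<in> arrs Qb" "qtgt Qb (cyc_nth c t) = qsrc Qb (cyc_nth c (t + 1))"
    "(cyc_nth c t, cyc_nth c (t + 1)) \<notin> rels Qb"
proof -
  have cycle: "is_oriented_cycle Qb c" using blossoming_oriented_cycle assms(1,2) .
  have "\<not> path_in_ideal Qb (c @ c)"
    using blossoming_path_in_ideal_iff[OF assms(1), of "c @ c"] assms(2,3)
    unfolding is_oriented_cycle_def by simp
  then show "cyc_nth c t \<in> arrs Qb" "qtgt Qb (cyc_nth c t) = qsrc Qb (cyc_nth c (t + 1))"
    "(cyc_nth c t, cyc_nth c (t + 1)) \<notin> rels Qb"
    using cyc_nth_in_arrs[OF cycle] cyc_nth_composable[OF cycle] cyc_nth_not_rel[OF cycle] by auto
qed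

lemma has_factor_cyc_nthE:
  assumes "has_factor lo hi w c"
  obtains n where
    "\<forall>k. n \<le> k \<and> k < n + int (length c) \<longrightarrow> in_dom lo hi k \<and> w k = (cyc_nth c (k - n), True)"
proof -
  obtain n where factor: "\<forall>k < length c. in_dom lo hi (n + int k) \<and> w (n + int k) = (c ! k, True)"
    using assms unfolding has_factor_def by blast
  have "in_dom lo hi k \<and> w k = (cyc_nth c (k - n), True)"
    if k: "n \<le> k" "k < n + int (length c)" for k
  proof -
    have "nat (k - n) < length c" using k by linarith
    then show ?thesis using factor[rule_format, of "nat (k - n)"] k by (simp add: cyc_nth_def)
  qed
  then show thesis using that by blast
qed

lemma in_dom_between:
  "in_dom lo hi i \<Longrightarrow> in_dom lo hi j \<Longrightarrow> i \<le> k \<Longrightarrow> k \<le> j \<Longrightarrow> in_dom lo hi k"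
  by (auto simp: in_dom_def split: option.splits)

lemma in_dom_inverse:
  "in_dom (map_option uminus hi) (map_option uminus lo) l \<longleftrightarrow> in_dom lo hi (- l)"
  by (cases lo; cases hi) (auto simp: in_dom_def)

lemma maximal_string_extends_right:
  assumes "maximal_string Q lo hi w" "in_dom lo hi l" "fst x \<in> arrs Q" "string_step Q (w l) x"
  shows "in_dom lo hi (l + 1)"
proof -
  have "hi \<noteq> Some (l + 1)" using assms unfolding maximal_string_def by (cases x) auto
  then show ?thesis using assms(2) by (auto simp: in_dom_def split: option.splits)
qed

lemma maximal_string_extends_left:
  assumes "maximal_string Q lo hi w" "in_dom lo hi l" "fst x \<in> arrs Q" "string_step Q x (w l)"
  shows "in_dom lo hi (l - 1)"
proof -
  have "lo \<noteq> Some (l - 1)" using assms unfolding maximal_string_def by (cases x) auto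
  then show ?thesis using assms(2) by (auto simp: in_dom_def split: option.splits)
qed

lemma locally_gentle_unique_successor:
  assumes "locally_gentle Q" "\<beta> \<in> arrs Q"
    and "\<gamma> \<in> arrs Q" "qtgt Q \<beta> = qsrc Q \<gamma>" "(\<beta>, \<gamma>) \<notin> rels Q"
    and "\<gamma>' \<in> arrs Q" "qtgt Q \<beta> = qsrc Q \<gamma>'" "(\<beta>, \<gamma>') \<notin> rels Q"
  shows "\<gamma> = \<gamma>'"
proof -
  let ?S = "{\<gamma>\<in>arrs Q. qtgt Q \<beta> = qsrc Q \<gamma> \<and> (\<beta>, \<gamma>) \<notin> rels Q}"
  have "card ?S \<le> 1" "finite ?S" using assms(1,2) unfolding locally_gentle_def by auto
  then show ?thesis using assms(3-) card_le_Suc0_iff_eq[of ?S] by auto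
qed

lemma locally_gentle_unique_predecessor:
  assumes "locally_gentle Q" "\<beta> \<in> arrs Q"
    and "\<alpha> \<in> arrs Q" "qtgt Q \<alpha> = qsrc Q \<beta>" "(\<alpha>, \<beta>) \<notin> rels Q"
    and "\<alpha>' \<in> arrs Q" "qtgt Q \<alpha>' = qsrc Q \<beta>" "(\<alpha>', \<beta>) \<notin> rels Q"
  shows "\<alpha> = \<alpha>'"
proof -
  let ?S = "{\<alpha>\<in>arrs Q. qtgt Q \<alpha> = qsrc Q \<beta> \<and> (\<alpha>, \<beta>) \<notin> rels Q}"
  have "card ?S \<le> 1" "finite ?S" using assms(1,2) unfolding locally_gentle_def by auto
  then show ?thesis using assms(3-) card_le_Suc0_iff_eq[of ?S] by auto
qed

lemma kisses_itself_if_periodic_run: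
  assumes string: "is_string Q lo hi w"
    and ends: "in_dom lo hi i" "in_dom lo hi j" "\<not> snd (w i)" "\<not> snd (w j)"
    and "0 < p" "i + p < j"
    and run: "\<And>k. i < k \<Longrightarrow> k < j \<Longrightarrow> w k = (f k, True)"
    and periodic: "\<And>t. f (t + p) = f t"
    and composable: "\<And>t. qtgt Q (f t) = qsrc Q (f (t + 1))"
  shows "kisses_itself Q lo hi w"
  unfolding kisses_itself_def
proof (rule exI[of _ i], rule exI[of _ "j - p"], rule exI[of _ "i + p"], rule exI[of _ j],
    intro conjI allI impI)
  have inside: "in_dom lo hi k" if "i \<le> k" "k \<le> j" for k
    using in_dom_between ends(1,2) that .
  show "i < j - p" "i + p < j" "j - p - i = j - (i + p)" using assms(6,7) by auto
  show "in_dom lo hi i" "in_dom lo hi j" "\<not> snd (w i)" "\<not> snd (w j)" by (fact ends)+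
  show "in_dom lo hi (j - p)" "in_dom lo hi (i + p)" "snd (w (j - p))" "snd (w (i + p))"
    using inside run assms(6,7) by auto
  have "ltgt Q (w i) = lsrc Q (w (i + 1))"
    using string inside[of i] inside[of "i + 1"] assms(6,7)
    unfolding is_string_def string_step_def by auto
  also have "\<dots> = qtgt Q (f (i + p))"
    using run[of "i + 1"] composable[of i] periodic[of i] assms(6,7) by (simp add: lsrc_def)
  also have "\<dots> = ltgt Q (w (i + p))"
    using run[of "i + p"] assms(6,7) by (simp add: ltgt_def)
  finally show "ltgt Q (w i) = ltgt Q (w (i + p))" .
  fix k
  assume "0 < k \<and> k < j - p - i"
  then show "w (i + k) = w (i + p + k)"
    using run[of "i + k"] run[of "i + p + k"] periodic[of "i + k"] assms(6) by (simp add: ac_simps)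
qed

context
  fixes Q :: "('v, 'a) bquiver" and lo hi :: "int option" and w :: "int \<Rightarrow> 'a letter"
  assumes gentle: "locally_gentle Q"
    and string: "is_string Q lo hi w"
    and maximal: "maximal_string Q lo hi w"
begin

lemma maximal_string_next_letter:
  assumes "in_dom lo hi l" "w l = (\<beta>, True)"
    and "\<gamma> \<in> arrs Q" "qtgt Q \<beta> = qsrc Q \<gamma>" "(\<beta>, \<gamma>) \<notin> rels Q"
  shows "in_dom lo hi (l + 1)" "snd (w (l + 1)) \<Longrightarrow> w (l + 1) = (\<gamma>, True)"
proof -
  have "string_step Q (w l) (\<gamma>, True)"
    using assms unfolding string_step_def lsrc_def ltgt_def by auto
  then show next_in_dom: "in_dom lo hi (l + 1)"
    using maximal_string_extends_right[OF maximal assms(1)] assms(3) by auto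
  assume direct: "snd (w (l + 1))"
  have "fst (w (l + 1)) \<in> arrs Q" "string_step Q (w l) (w (l + 1))" "\<beta> \<in> arrs Q"
    using string assms(1,2) next_in_dom unfolding is_string_def by force+
  then have "\<gamma> = fst (w (l + 1))"
    using locally_gentle_unique_successor[OF gentle] assms(2-) direct
    unfolding string_step_def lsrc_def ltgt_def by auto
  then show "w (l + 1) = (\<gamma>, True)" using direct by (simp add: prod_eq_iff)
qed

lemma maximal_string_prev_letter:
  assumes "in_dom lo hi l" "w l = (\<beta>, True)"
    and "\<alpha> \<in> arrs Q" "qtgt Q \<alpha> = qsrc Q \<beta>" "(\<alpha>, \<beta>) \<notin> rels Q"
  shows "in_dom lo hi (l - 1)" "snd (w (l - 1)) \<Longrightarrow> w (l - 1) = (\<alpha>, True)"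
proof -
  have "string_step Q (\<alpha>, True) (w l)"
    using assms unfolding string_step_def lsrc_def ltgt_def by auto
  then show prev_in_dom: "in_dom lo hi (l - 1)"
    using maximal_string_extends_left[OF maximal assms(1)] assms(3) by auto
  assume direct: "snd (w (l - 1))"
  have "fst (w (l - 1)) \<in> arrs Q" "string_step Q (w (l - 1)) (w l)" "\<beta> \<in> arrs Q"
    using string assms(1,2) prev_in_dom unfolding is_string_def by force+
  then have "\<alpha> = fst (w (l - 1))"
    using locally_gentle_unique_predecessor[OF gentle] assms(2-) direct
    unfolding string_step_def lsrc_def ltgt_def by auto
  then show "w (l - 1) = (\<alpha>, True)" using direct by (simp add: prod_eq_iff)
qed

lemma maximal_string_cycle_run_right:
  assumes "\<And>t. f t \<in> arrs Q" "\<And>t. qtgt Q (f t) = qsrc Q (f (t + 1))"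
    "\<And>t. (f t, f (t + 1)) \<notin> rels Q"
    and "in_dom lo hi m" "w m = (f m, True)"
  obtains (right_infinite) "hi = None" "\<And>k. m \<le> k \<Longrightarrow> w k = (f k, True)"
    | (right_end) j where "m < j" "in_dom lo hi j" "\<not> snd (w j)"
        "\<And>k. m \<le> k \<Longrightarrow> k < j \<Longrightarrow> w k = (f k, True)"
proof -
  define run where
    "run d \<longleftrightarrow> in_dom lo hi (m + int d) \<and> w (m + int d) = (f (m + int d), True)" for d
  have run_Suc: "run (Suc d) \<or> in_dom lo hi (m + int (Suc d)) \<and> \<not> snd (w (m + int (Suc d)))"
    if "run d" for d
  proof -
    let ?l = "m + int d"
    have "in_dom lo hi ?l" "w ?l = (f ?l, True)" using that unfolding run_def by auto
    note next_letter = maximal_string_next_letter[OF this assms(1-3)]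
    have shift: "m + int (Suc d) = ?l + 1" by simp
    show ?thesis unfolding run_def shift using next_letter by blast
  qed
  show thesis
  proof (cases "\<forall>d. run d")
    case True
    have "hi = None"
    proof (cases hi)
      case (Some h)
      then show ?thesis using True[rule_format, of "nat (h - m)"] unfolding run_def in_dom_def
        by (auto split: if_splits)
    qed
    moreover have "w k = (f k, True)" if "m \<le> k" for k
      using True[rule_format, of "nat (k - m)"] that unfolding run_def by simp
    ultimately show thesis by (rule right_infinite)
  next
    case False
    then obtain d where d: "\<not> run d" "\<forall>e<d. run e"
      using exists_least_iff[of "\<lambda>d. \<not> run d"] by auto
    moreover have "run 0" using assms(4,5) unfolding run_def by simp
    ultimately obtain e where "d = Suc e" "run e" by (metis gr0_conv_Suc lessI neq0_conv)
    then have "in_dom lo hi (m + int d)" "\<not> snd (w (m + int d))" using run_Suc d(1) by auto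
    moreover have "w k = (f k, True)" if "m \<le> k" "k < m + int d" for k
      using d(2)[rule_format, of "nat (k - m)"] that unfolding run_def by simp
    ultimately show thesis using \<open>d = Suc e\<close> by (intro right_end) auto
  qed
qed

lemma maximal_string_cycle_run_left:
  assumes "\<And>t. f t \<in> arrs Q" "\<And>t. qtgt Q (f t) = qsrc Q (f (t + 1))"
    "\<And>t. (f t, f (t + 1)) \<notin> rels Q"
    and "in_dom lo hi m" "w m = (f m, True)"
  obtains (left_infinite) "lo = None" "\<And>k. k \<le> m \<Longrightarrow> w k = (f k, True)"
    | (left_end) i where "i < m" "in_dom lo hi i" "\<not> snd (w i)"
        "\<And>k. i < k \<Longrightarrow> k \<le> m \<Longrightarrow> w k = (f k, True)"
proof -
  define run where
    "run d \<longleftrightarrow> in_dom lo hi (m - int d) \<and> w (m - int d) = (f (m - int d), True)" for d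
  have run_Suc: "run (Suc d) \<or> in_dom lo hi (m - int (Suc d)) \<and> \<not> snd (w (m - int (Suc d)))"
    if "run d" for d
  proof -
    let ?l = "m - int d"
    have "in_dom lo hi ?l" "w ?l = (f ?l, True)" using that unfolding run_def by auto
    note prev_letter = maximal_string_prev_letter[OF this assms(1)[of "?l - 1"]]
    have shift: "m - int (Suc d) = ?l - 1" by simp
    have "qtgt Q (f (?l - 1)) = qsrc Q (f ?l)" "(f (?l - 1), f ?l) \<notin> rels Q"
      using assms(2,3)[of "?l - 1"] by simp_all
    then show ?thesis unfolding run_def shift using prev_letter by blast
  qed
  show thesis
  proof (cases "\<forall>d. run d")
    case True
    have "lo = None"
    proof (cases lo)
      case (Some l)
      then show ?thesis using True[rule_format, of "nat (m - l)"] unfolding run_def in_dom_def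
        by (auto split: if_splits)
    qed
    moreover have "w k = (f k, True)" if "k \<le> m" for k
      using True[rule_format, of "nat (m - k)"] that unfolding run_def by simp
    ultimately show thesis by (rule left_infinite)
  next
    case False
    then obtain d where d: "\<not> run d" "\<forall>e<d. run e"
      using exists_least_iff[of "\<lambda>d. \<not> run d"] by auto
    moreover have "run 0" using assms(4,5) unfolding run_def by simp
    ultimately obtain e where "d = Suc e" "run e" by (metis gr0_conv_Suc lessI neq0_conv)
    then have "in_dom lo hi (m - int d)" "\<not> snd (w (m - int d))" using run_Suc d(1) by auto
    moreover have "w k = (f k, True)" if "m - int d < k" "k \<le> m" for k
      using d(2)[rule_format, of "nat (m - k)"] that unfolding run_def by simp
    ultimately show thesis using \<open>d = Suc e\<close> by (intro left_end) auto
  qed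
qed

lemma maximal_string_periodic_run_cases:
  assumes arrs: "\<And>t. f t \<in> arrs Q" and composable: "\<And>t. qtgt Q (f t) = qsrc Q (f (t + 1))"
    and not_rel: "\<And>t. (f t, f (t + 1)) \<notin> rels Q" and periodic: "\<And>t. f (t + p) = f t"
    and "0 < p" and run: "\<forall>k. n \<le> k \<and> k < n + p \<longrightarrow> in_dom lo hi k \<and> w k = (f k, True)"
  obtains (power) "hi = None" "\<And>k. n \<le> k \<Longrightarrow> w k = (f k, True)"
    | (inverse_power) "lo = None" "\<And>k. k \<le> n \<Longrightarrow> w k = (f k, True)"
    | (kisses) "kisses_itself Q lo hi w"
proof -
  have start: "in_dom lo hi n" "w n = (f n, True)" using run \<open>0 < p\<close> by simp_all
  show thesis
  proof (cases rule: maximal_string_cycle_run_right[OF arrs composable not_rel start,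
      case_names right_infinite right_end])
    case right_infinite
    then show thesis by (rule power)
  next
    case (right_end j)
    show thesis
    proof (cases rule: maximal_string_cycle_run_left[OF arrs composable not_rel start,
        case_names left_infinite left_end])
      case left_infinite
      then show thesis by (rule inverse_power)
    next
      case (left_end i)
      have "n + p \<le> j" using run[rule_format, of j] right_end by force
      then have "kisses_itself Q lo hi w"
        using right_end left_end \<open>0 < p\<close> composable periodic
        by (intro kisses_itself_if_periodic_run[OF string, of i j p f]) force+
      then show thesis by (rule kisses)
    qed
  qed
qed

end

lemma ends_with_cycle_power_if_run:
  assumes "hi = None" "in_dom lo hi m" "\<And>k. m \<le> k \<Longrightarrow> w k = (cyc_nth c (k - m), True)"
  shows "ends_with_cycle_power lo hi w c"
  unfolding ends_with_cycle_power_def using assms by (auto simp: cyc_nth_of_nat)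

lemma ends_with_inverse_cycle_power_if_run:
  assumes "c \<noteq> []" "lo = None" "in_dom lo hi m" "\<And>k. k \<le> m \<Longrightarrow> w k = (cyc_nth c (k - m), True)"
  shows "ends_with_cycle_power (map_option uminus hi) (map_option uminus lo) (inv_word w) c"
  unfolding ends_with_cycle_power_def
proof (intro conjI exI[of _ "1 - m"] disjI2 allI)
  show "map_option uminus lo = None" using assms(2) by simp
  show "in_dom (map_option uminus hi) (map_option uminus lo) (1 - m)"
    using assms(2,3) by (auto simp: in_dom_inverse in_dom_def split: option.splits)
  fix k :: nat
  have "w (m - 1 - int k) = (cyc_nth c (- 1 - int k), True)"
    using assms(4)[of "m - 1 - int k"] by simp
  then show "inv_word w (1 - m + int k) = (c ! (length c - 1 - k mod length c), False)"
    using cyc_nth_neg[OF assms(1)] by (simp add: inv_word_def algebra_simps)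
qed

theorem lemma5p9:
  fixes Q Qb :: "('v, 'a) bquiver"
    and lo hi :: "int option" and w :: "int \<Rightarrow> 'a \<times> bool"
    and c :: "'a list"
  assumes "locally_gentle Q"
    and "is_blossoming Q Qb"
    and "is_walk Qb lo hi w"
    and "\<not> kisses_itself Qb lo hi w"
    and "is_oriented_cycle Q c"
    and "\<not> path_in_ideal Q c"
    and "\<not> path_in_ideal Q (c @ c)"
    and "has_factor lo hi w c"
  shows "ends_with_cycle_power lo hi w c \<or>
         ends_with_cycle_power (map_option uminus hi) (map_option uminus lo) (inv_word w) c"
proof -
  have gentle: "locally_gentle Qb" using assms(2) unfolding is_blossoming_def by blast
  have string: "is_string Qb lo hi w" and maximal: "maximal_string Qb lo hi w"
    using assms(3) unfolding is_walk_def by auto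
  obtain n where factor:
    "\<forall>k. n \<le> k \<and> k < n + int (length c) \<longrightarrow> in_dom lo hi k \<and> w k = (cyc_nth c (k - n), True)"
    using has_factor_cyc_nthE assms(8) by blast
  define f where "f t = cyc_nth c (t - n)" for t
  have f: "f t \<in> arrs Qb" "qtgt Qb (f t) = qsrc Qb (f (t + 1))" "(f t, f (t + 1)) \<notin> rels Qb"
    "f (t + int (length c)) = f t" for t
    using blossoming_cyc_nth[OF assms(2,5,7), of "t - n"] cyc_nth_add_length[of c "t - n"]
    unfolding f_def by (simp_all add: algebra_simps)
  have on_factor: "\<forall>k. n \<le> k \<and> k < n + int (length c) \<longrightarrow> in_dom lo hi k \<and> w k = (f k, True)"
    using factor unfolding f_def .
  have "c \<noteq> []" using assms(5) unfolding is_oriented_cycle_def by simp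
  then have period: "0 < int (length c)" and "in_dom lo hi n" using on_factor by simp_all
  show ?thesis
  proof (cases rule: maximal_string_periodic_run_cases[OF gentle string maximal f period on_factor,
      case_names power inverse_power kisses])
    case power
    have "ends_with_cycle_power lo hi w c"
      by (rule ends_with_cycle_power_if_run[OF power(1) \<open>in_dom lo hi n\<close>])
        (simp add: power(2) f_def)
    then show ?thesis ..
  next
    case inverse_power
    have "ends_with_cycle_power (map_option uminus hi) (map_option uminus lo) (inv_word w) c"
      by (rule ends_with_inverse_cycle_power_if_run[OF \<open>c \<noteq> []\<close> inverse_power(1) \<open>in_dom lo hi n\<close>])
        (simp add: inverse_power(2) f_def)
    then show ?thesis ..
  next
    case kisses
    with assms(4) show ?thesis by contradiction
  qed
qed

end
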